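(* Let $p\ge1$, let $\mathcal{R}\subseteq\mathbb{R}$, and let $T:\mathbb{R}^M\times\cdots\times\mathbb{R}^M\to\mathbb{R}^D$ ($N$ factors) be a real $N$-linear map, $T(a^{(1)},\dots,a^{(N)})_i=\sum_sT_{i,s}\prod_ka^{(k)}_{s_k}$, which is a contraction on $\mathcal{R}^M\times\cdots\times\mathcal{R}^M$ with respect to the $p$-norm: $\|T(a^{(1)},\dots,a^{(N)})\|_p\le\prod_k\|a^{(k)}\|_p$ for all $a^{(k)}\in\mathcal{R}^M$. Then every local hidden variable model whose values lie in $\mathcal{R}$ satisfies $$\Big\|\big\langle T(A^{(1)},\dots,A^{(N)})\big\rangle\Big\|_p^p\le\Big\langle\prod_{k=1}^N\|A^{(k)}\|_p^p\Big\rangle,$$ whenever the right-hand side is finite.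
   Context: $\|a\|_p=(\sum_j|a_j|^p)^{1/p}$. A local hidden variable model is a probability space $(\Lambda,\mu)$ with measurable functions $A^{(k)}_j:\Lambda\to\mathcal{R}$ ($k=1,\dots,N$ site, $j=1,\dots,M$ observable); $A^{(k)}=(A^{(k)}_1,\dots,A^{(k)}_M)$ and $\langle\cdot\rangle$ is expectation w.r.t. $\mu$, taken componentwise for vectors. *)

theory Defs
  imports "HOL-Probability.Probability"
begin

definition pnorm :: "real \<Rightarrow> nat \<Rightarrow> (nat \<Rightarrow> real) \<Rightarrow> real" where
  "pnorm p n a = (\<Sum>j<n. \<bar>a j\<bar> powr p) powr (1 / p)"

definition multilin :: "nat \<Rightarrow> nat \<Rightarrow> (nat \<Rightarrow> (nat \<Rightarrow> nat) \<Rightarrow> real)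
    \<Rightarrow> (nat \<Rightarrow> nat \<Rightarrow> real) \<Rightarrow> nat \<Rightarrow> real" where
  "multilin N M Tc a i =
     (\<Sum>s\<in>PiE {..<N} (\<lambda>_. {..<M}). Tc i s * (\<Prod>k<N. a k (s k)))"

end

theory Submission
  imports Defs
begin

text \<open>Jensen's inequality for the convex function \<open>t \<mapsto> \<bar>t\<bar>\<^sup>p\<close>, applied to each coordinate of
  \<open>T(A)\<close>, bounds \<open>\<parallel>\<langle>T(A)\<rangle>\<parallel>\<^sub>p\<^sup>p\<close> by \<open>\<langle>\<parallel>T(A)\<parallel>\<^sub>p\<^sup>p\<rangle>\<close>; the contraction property, used pointwise on the
  hidden variable space, bounds the integrand by \<open>\<Prod>\<^sub>k \<parallel>A\<^sub>k\<parallel>\<^sub>p\<^sup>p\<close>. Finiteness of the right-hand side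
  supplies the integrability that Jensen's inequality requires.\<close>

lemma pnorm_nonneg: "pnorm p n a \<ge> 0"
  unfolding pnorm_def by simp

lemma pnorm_powr:
  assumes "p \<ge> 1"
  shows "pnorm p n a powr p = (\<Sum>j<n. \<bar>a j\<bar> powr p)"
proof -
  have "pnorm p n a powr p = (\<Sum>j<n. \<bar>a j\<bar> powr p) powr (1/p * p)"
    unfolding pnorm_def by (simp add: powr_powr)
  also have "1/p * p = 1" using assms by simp
  finally show ?thesis by (simp add: sum_nonneg)
qed

lemma convex_on_powr_nonneg:
  assumes "(p::real) \<ge> 1"
  shows "convex_on {0..} (\<lambda>x. x powr p)"
proof (rule convex_on_linorderI)
  fix t x y :: real
  assume t: "t > 0" "t < 1" and xy: "x \<in> {0..}" "y \<in> {0..}" "x < y"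
  show "((1 - t) *\<^sub>R x + t *\<^sub>R y) powr p \<le> (1 - t) * x powr p + t * y powr p"
  proof (cases "x = 0")
    case True
    have "t powr p \<le> t powr 1"
      by (rule powr_mono') (use t assms in auto)
    then have "t powr p * y powr p \<le> t * y powr p" using t by (intro mult_right_mono) auto
    then show ?thesis using True t xy by (simp add: powr_mult)
  next
    case False
    then have "x > 0" "y > 0" using xy by auto
    then show ?thesis using convex_onD[OF powr_convex[OF assms], of t x y] t by auto
  qed
qed (simp add: convex_real_interval)

lemma convex_on_abs_powr:
  assumes "(p::real) \<ge> 1"
  shows "convex_on UNIV (\<lambda>x. \<bar>x\<bar> powr p)"
proof (rule convex_onI)
  fix t x y :: real
  assume t: "t > 0" "t < 1"
  have "\<bar>(1 - t) *\<^sub>R x + t *\<^sub>R y\<bar> powr p \<le> ((1 - t) * \<bar>x\<bar> + t * \<bar>y\<bar>) powr p"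
    by (rule powr_mono2) (use t assms in \<open>auto simp: abs_mult intro!: order_trans[OF abs_triangle_ineq]\<close>)
  also have "\<dots> \<le> (1 - t) * \<bar>x\<bar> powr p + t * \<bar>y\<bar> powr p"
    using convex_onD[OF convex_on_powr_nonneg[OF assms], of t "\<bar>x\<bar>" "\<bar>y\<bar>"] t by auto
  finally show "\<bar>(1 - t) *\<^sub>R x + t *\<^sub>R y\<bar> powr p \<le> (1 - t) * \<bar>x\<bar> powr p + t * \<bar>y\<bar> powr p" .
qed auto

lemma abs_le_one_plus_abs_powr:
  assumes "(p::real) \<ge> 1"
  shows "\<bar>x\<bar> \<le> 1 + \<bar>x\<bar> powr p"
proof (cases "\<bar>x\<bar> \<le> 1")
  case False
  then have "\<bar>x\<bar> powr 1 \<le> \<bar>x\<bar> powr p" by (intro powr_mono) (use assms in auto)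
  then show ?thesis using False by simp
qed (simp add: add_increasing2)

lemma (in finite_measure) integrable_of_integrable_abs_powr:
  fixes f :: "'a \<Rightarrow> real"
  assumes p: "p \<ge> 1" and f: "f \<in> borel_measurable M"
    and fp: "integrable M (\<lambda>x. \<bar>f x\<bar> powr p)"
  shows "integrable M f"
proof (rule Bochner_Integration.integrable_bound[OF _ f])
  show "integrable M (\<lambda>x. 1 + \<bar>f x\<bar> powr p)"
    using fp by (intro Bochner_Integration.integrable_add) auto
  show "AE x in M. norm (f x) \<le> norm (1 + \<bar>f x\<bar> powr p)"
    using abs_le_one_plus_abs_powr[OF p] by auto
qed

lemma (in prob_space) abs_expectation_powr_le:
  fixes f :: "'a \<Rightarrow> real"
  assumes p: "p \<ge> 1" and f: "f \<in> borel_measurable M"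
    and fp: "integrable M (\<lambda>x. \<bar>f x\<bar> powr p)"
  shows "\<bar>expectation f\<bar> powr p \<le> expectation (\<lambda>x. \<bar>f x\<bar> powr p)"
  using jensens_inequality[OF integrable_of_integrable_abs_powr[OF p f fp], of UNIV]
    fp convex_on_abs_powr[OF p] by auto

lemma (in prob_space) pnorm_expectation_powr_le:
  fixes F :: "nat \<Rightarrow> 'a \<Rightarrow> real"
  assumes p: "p \<ge> 1"
    and F: "\<And>i. i < n \<Longrightarrow> F i \<in> borel_measurable M"
    and G: "integrable M G"
    and bound: "\<And>x. x \<in> space M \<Longrightarrow> pnorm p n (\<lambda>i. F i x) powr p \<le> G x"
  shows "pnorm p n (\<lambda>i. expectation (F i)) powr p \<le> expectation G"
proof -
  have coord_le: "\<bar>F i x\<bar> powr p \<le> G x" if "x \<in> space M" "i < n" for i x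
    using bound[OF that(1)] member_le_sum[of i "{..<n}" "\<lambda>i. \<bar>F i x\<bar> powr p"] that(2)
    by (simp add: pnorm_powr[OF p])
  have Fp: "integrable M (\<lambda>x. \<bar>F i x\<bar> powr p)" if "i < n" for i
  proof (rule Bochner_Integration.integrable_bound[OF G])
    show "(\<lambda>x. \<bar>F i x\<bar> powr p) \<in> borel_measurable M"
      using F[OF that] by measurable
    show "AE x in M. norm (\<bar>F i x\<bar> powr p) \<le> norm (G x)"
    proof (rule AE_I2)
      fix x assume "x \<in> space M"
      then have "\<bar>F i x\<bar> powr p \<le> G x" by (rule coord_le[OF _ that])
      then show "norm (\<bar>F i x\<bar> powr p) \<le> norm (G x)" by simp
    qed
  qed
  have "pnorm p n (\<lambda>i. expectation (F i)) powr p = (\<Sum>i<n. \<bar>expectation (F i)\<bar> powr p)"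
    by (rule pnorm_powr[OF p])
  also have "\<dots> \<le> (\<Sum>i<n. expectation (\<lambda>x. \<bar>F i x\<bar> powr p))"
    by (intro sum_mono abs_expectation_powr_le[OF p F Fp]) auto
  also have "\<dots> = expectation (\<lambda>x. \<Sum>i<n. \<bar>F i x\<bar> powr p)"
    by (rule Bochner_Integration.integral_sum[symmetric]) (use Fp in auto)
  also have "\<dots> \<le> expectation G"
    by (rule integral_mono) (use Fp G bound in \<open>auto simp: pnorm_powr[OF p] intro!: Bochner_Integration.integrable_sum\<close>)
  finally show ?thesis .
qed

lemma borel_measurable_multilin:
  assumes "\<And>k j. k < N \<Longrightarrow> j < M \<Longrightarrow> A k j \<in> borel_measurable \<mu>"
  shows "(\<lambda>x. multilin N M Tc (\<lambda>k j. A k j x) i) \<in> borel_measurable \<mu>"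
  unfolding multilin_def
  by (intro borel_measurable_sum borel_measurable_times borel_measurable_const
      borel_measurable_prod assms) (auto simp: PiE_iff)

theorem proposition8:
  fixes p :: real and N M D :: nat and R :: "real set"
    and Tc :: "nat \<Rightarrow> (nat \<Rightarrow> nat) \<Rightarrow> real"
    and \<mu> :: "'l measure" and A :: "nat \<Rightarrow> nat \<Rightarrow> 'l \<Rightarrow> real"
  assumes p: "p \<ge> 1"
    and contraction: "\<And>a. (\<And>k j. k < N \<Longrightarrow> j < M \<Longrightarrow> a k j \<in> R) \<Longrightarrow>
        pnorm p D (multilin N M Tc a) \<le> (\<Prod>k<N. pnorm p M (a k))"
    and prob: "prob_space \<mu>"
    and meas: "\<And>k j. k < N \<Longrightarrow> j < M \<Longrightarrow> A k j \<in> borel_measurable \<mu>"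
    and vals: "\<And>k j x. k < N \<Longrightarrow> j < M \<Longrightarrow> x \<in> space \<mu> \<Longrightarrow> A k j x \<in> R"
    and finite_rhs: "(\<integral>\<^sup>+ x. ennreal (\<Prod>k<N. pnorm p M (\<lambda>j. A k j x) powr p) \<partial>\<mu>) < \<infinity>"
  shows "pnorm p D (\<lambda>i. \<integral>x. multilin N M Tc (\<lambda>k j. A k j x) i \<partial>\<mu>) powr p
           \<le> (\<integral>x. (\<Prod>k<N. pnorm p M (\<lambda>j. A k j x) powr p) \<partial>\<mu>)"
proof (rule prob_space.pnorm_expectation_powr_le[OF prob p])
  show "(\<lambda>x. multilin N M Tc (\<lambda>k j. A k j x) i) \<in> borel_measurable \<mu>" for i
    by (rule borel_measurable_multilin[OF meas])
  have "(\<lambda>x. \<Prod>k<N. pnorm p M (\<lambda>j. A k j x) powr p) \<in> borel_measurable \<mu>"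
    unfolding pnorm_def by (intro borel_measurable_prod powr_real_measurable
        borel_measurable_sum borel_measurable_abs borel_measurable_const meas) auto
  moreover have "norm (\<Prod>k<N. pnorm p M (\<lambda>j. A k j x) powr p) = (\<Prod>k<N. pnorm p M (\<lambda>j. A k j x) powr p)"
    for x by (simp add: prod_nonneg)
  ultimately show "integrable \<mu> (\<lambda>x. \<Prod>k<N. pnorm p M (\<lambda>j. A k j x) powr p)"
    using finite_rhs by (intro integrableI_bounded) simp_all
  fix x assume x: "x \<in> space \<mu>"
  have contr: "pnorm p D (multilin N M Tc (\<lambda>k j. A k j x)) \<le> (\<Prod>k<N. pnorm p M (\<lambda>j. A k j x))"
    by (rule contraction) (rule vals[OF _ _ x])
  have "pnorm p D (multilin N M Tc (\<lambda>k j. A k j x)) powr p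
      \<le> (\<Prod>k<N. pnorm p M (\<lambda>j. A k j x)) powr p"
    by (rule powr_mono2) (use p pnorm_nonneg contr in auto)
  then show "pnorm p D (\<lambda>i. multilin N M Tc (\<lambda>k j. A k j x) i) powr p
      \<le> (\<Prod>k<N. pnorm p M (\<lambda>j. A k j x) powr p)"
    by (simp add: prod_powr_distrib)
qed

end
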